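(* Let $\varrho$ be a normalized proximate order of order $\rho>0$. Then for every $0<\sigma'<\sigma$ there exists a constant $C(\sigma,\sigma')$ such that $$\|x^\ell\|_{\varrho,\sigma}\le C(\sigma,\sigma')\frac{G_{\varrho,\ell}}{\sigma'^{\ell/\rho}}\qquad\text{for all }\ell\in\mathbb{N}_0.$$
   Context: Paravectors $x=x_0+\sum_{\ell=1}^nx_\ell e_\ell$ in the Clifford algebra $\mathbb{R}_n$ are identified with $\mathbb{R}^{n+1}$, and $|x|$ is the Euclidean norm; $x^\ell$ is the monomial function. A proximate order is a differentiable $\varrho:[0,\infty)\to[0,\infty)$ with $\lim_{r\to\infty}\varrho(r)=\rho>0$ and $\lim_{r\to\infty}\varrho'(r)r\ln r=0$; normalized means $r\mapsto r^{\varrho(r)}$ is strictly increasing on $(0,\infty)$ and tends to $0$ as $r\to0^+$; $\varphi$ is the inverse of $r\mapsto r^{\varrho(r)}$, and $G_{\varrho,0}=1$, $G_{\varrho,\ell}=\varphi(\ell)^\ell/(e\rho)^{\ell/\rho}$ for $\ell\in\mathbb{N}$. For a function $f$ on $\mathbb{R}^{n+1}$ with values in $\mathbb{R}_n$, $\|f\|_{\varrho,\sigma}=\sup_{x\in\mathbb{R}^{n+1}}|f(x)|e^{-\sigma|x|^{\varrho(|x|)}}$. *)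

theory Defs
  imports "HOL-Analysis.Analysis"
begin

text \<open>Clifford algebra R_n (generators e_1..e_n with e_i^2 = -1, e_i e_j = - e_j e_i).
  An element is represented by its coefficients on the basis e_A, A a subset of {1..n}:
  a function nat set => real (coefficients outside Pow {1..n} are ignored).\<close>

type_synonym clifford = "nat set \<Rightarrow> real"

text \<open>Sign of the product e_A e_B = clif_sign A B * e_(A symdiff B), where e_A is the
  ordered product of the generators with indices in A (increasing).\<close>
definition clif_sign :: "nat set \<Rightarrow> nat set \<Rightarrow> real" where
  "clif_sign A B = (-1) ^ (card {(i, j). i \<in> A \<and> j \<in> B \<and> j < i} + card (A \<inter> B))"

definition symdiff :: "nat set \<Rightarrow> nat set \<Rightarrow> nat set" where
  "symdiff A B = (A - B) \<union> (B - A)"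

definition clif_mult :: "nat \<Rightarrow> clifford \<Rightarrow> clifford \<Rightarrow> clifford" where
  "clif_mult n a b = (\<lambda>C. if C \<subseteq> {1..n}
      then (\<Sum>A\<in>Pow {1..n}. clif_sign A (symdiff A C) * a A * b (symdiff A C)) else 0)"

definition clif_one :: clifford where
  "clif_one = (\<lambda>A. if A = {} then 1 else 0)"

fun clif_pow :: "nat \<Rightarrow> clifford \<Rightarrow> nat \<Rightarrow> clifford" where
  "clif_pow n a 0 = clif_one"
| "clif_pow n a (Suc l) = clif_mult n (clif_pow n a l) a"

definition clif_norm :: "nat \<Rightarrow> clifford \<Rightarrow> real" where
  "clif_norm n a = sqrt (\<Sum>A\<in>Pow {1..n}. (a A)^2)"

text \<open>Paravectors x = x_0 + sum x_l e_l, identified with R^(n+1): represented by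
  coordinates x :: nat => real, only x 0 .. x n are relevant.\<close>
definition paravec :: "nat \<Rightarrow> (nat \<Rightarrow> real) \<Rightarrow> clifford" where
  "paravec n x = (\<lambda>A. if A = {} then x 0
       else if (\<exists>l\<in>{1..n}. A = {l}) then x (THE l. A = {l}) else 0)"

definition para_norm :: "nat \<Rightarrow> (nat \<Rightarrow> real) \<Rightarrow> real" where
  "para_norm n x = sqrt (\<Sum>l\<le>n. (x l)^2)"

definition paravectors :: "nat \<Rightarrow> (nat \<Rightarrow> real) set" where
  "paravectors n = {x. \<forall>l>n. x l = 0}"

definition prox_norm :: "nat \<Rightarrow> (real \<Rightarrow> real) \<Rightarrow> real \<Rightarrow> ((nat \<Rightarrow> real) \<Rightarrow> clifford) \<Rightarrow> ereal" where
  "prox_norm n vr \<sigma> f = (SUP x\<in>paravectors n.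
      ereal (clif_norm n (f x) * exp (- \<sigma> * (para_norm n x) powr (vr (para_norm n x)))))"

definition proximate_order :: "(real \<Rightarrow> real) \<Rightarrow> real \<Rightarrow> bool" where
  "proximate_order vr \<rho> \<longleftrightarrow>
     (\<forall>r\<ge>0. vr differentiable (at r within {0..})) \<and>
     (\<forall>r\<ge>0. vr r \<ge> 0) \<and>
     \<rho> > 0 \<and>
     (vr \<longlongrightarrow> \<rho>) at_top \<and>
     ((\<lambda>r. deriv vr r * r * ln r) \<longlongrightarrow> 0) at_top"

definition normalized_proximate_order :: "(real \<Rightarrow> real) \<Rightarrow> real \<Rightarrow> bool" where
  "normalized_proximate_order vr \<rho> \<longleftrightarrow>
     proximate_order vr \<rho> \<and>
     strict_mono_on {0<..} (\<lambda>r. r powr vr r) \<and>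
     ((\<lambda>r. r powr vr r) \<longlongrightarrow> 0) (at_right 0)"

definition prox_phi :: "(real \<Rightarrow> real) \<Rightarrow> real \<Rightarrow> real" where
  "prox_phi vr = the_inv_into {0<..} (\<lambda>r. r powr vr r)"

definition prox_G :: "(real \<Rightarrow> real) \<Rightarrow> real \<Rightarrow> nat \<Rightarrow> real" where
  "prox_G vr \<rho> l = (if l = 0 then 1
     else (prox_phi vr (real l)) ^ l / (exp 1 * \<rho>) powr (real l / \<rho>))"

end

(*
  A paravector x = x_0 + v satisfies v^2 = -|v|^2, so its powers stay in the plane spanned by 1
  and v and multiply there like complex numbers: x^l = a + b v with a + i b |v| = (x_0 + i |v|)^l.
  Hence |x^l| = |x|^l, and the weighted norm of x^l is sup_{r >= 0} r^l exp (-sigma V r), where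
  V r = r^{rho(r)}.

  By the mean value theorem applied to u |-> rho(e^u) u, whose derivative tends to rho, the
  increment ln V r - ln V R equals X (ln r - ln R) with X arbitrarily close to rho once r and R are
  large. Put R = phi l, so that V R = l, and s = ln r - ln R. Then
    l ln r - sigma V r = l (ln R + s - sigma e^(X s)) <= l (ln R - (1 + ln (X sigma)) / X),
  and for X close to rho the right-hand side is at most l (ln R - (1 + ln (rho sigma')) / rho),
  because sigma' < sigma; exponentiating gives exactly G_l / sigma'^(l / rho). Radii r below the
  mean-value range are harmless because phi l tends to infinity, and the finitely many small l are
  absorbed into the constant.
*)

theory Submission
  imports Defs
begin

section \<open>Powers of paravectors\<close>

lemma paravec_empty [simp]: "paravec n x {} = x 0"
  by (simp add: paravec_def)

lemma paravec_singleton [simp]: "paravec n x {i} = (if i \<in> {1..n} then x i else 0)"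
  by (auto simp: paravec_def)

lemma paravec_non_singleton: "A \<noteq> {} \<Longrightarrow> \<nexists>i. A = {i} \<Longrightarrow> paravec n x A = 0"
  by (auto simp: paravec_def)

lemma clif_sign_empty [simp]: "clif_sign {} B = 1" "clif_sign A {} = 1"
  by (simp_all add: clif_sign_def)

lemma clif_sign_singletons: "clif_sign {j} {k} = (if k \<le> j then -1 else 1)"
proof -
  have "{(a, b). a \<in> {j} \<and> b \<in> {k} \<and> b < a} = (if k < j then {(j, k)} else {})"
    by auto
  then show ?thesis
    by (auto simp: clif_sign_def)
qed

lemma sum_Pow_empty_singletons:
  assumes "finite S" and "\<And>A. A \<subseteq> S \<Longrightarrow> A \<noteq> {} \<Longrightarrow> \<nexists>i. A = {i} \<Longrightarrow> g A = 0"
  shows "(\<Sum>A\<in>Pow S. g A) = g {} + (\<Sum>i\<in>S. g {i})"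
proof -
  have "(\<Sum>A\<in>Pow S. g A) = (\<Sum>A\<in>insert {} ((\<lambda>i. {i}) ` S). g A)"
    using assms by (intro sum.mono_neutral_right) auto
  also have "\<dots> = g {} + (\<Sum>i\<in>S. g {i})"
    using assms(1) by (subst sum.insert) (auto simp: sum.reindex)
  finally show ?thesis .
qed

lemma clif_mult_paravec_left:
  assumes "C \<subseteq> {1..n}"
  shows "clif_mult n (paravec n y) b C
    = y 0 * b C + (\<Sum>i=1..n. clif_sign {i} (symdiff {i} C) * y i * b (symdiff {i} C))"
proof -
  have "clif_mult n (paravec n y) b C
      = (\<Sum>A\<in>Pow {1..n}. clif_sign A (symdiff A C) * paravec n y A * b (symdiff A C))"
    using assms by (simp add: clif_mult_def)
  also have "\<dots> = y 0 * b C + (\<Sum>i=1..n. clif_sign {i} (symdiff {i} C) * y i * b (symdiff {i} C))"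
    by (subst sum_Pow_empty_singletons) (auto simp: paravec_non_singleton symdiff_def)
  finally show ?thesis .
qed

lemma clif_mult_paravec_scalar:
  "clif_mult n (paravec n y) (paravec n x) {} = y 0 * x 0 - (\<Sum>i=1..n. y i * x i)"
proof -
  have "clif_sign {i} (symdiff {i} {}) * y i * paravec n x (symdiff {i} {}) = - (y i * x i)"
    if "i \<in> {1..n}" for i
    using that by (simp add: symdiff_def clif_sign_singletons)
  then show ?thesis
    by (simp add: clif_mult_paravec_left sum_negf)
qed

lemma clif_mult_paravec_vector:
  assumes "k \<in> {1..n}"
  shows "clif_mult n (paravec n y) (paravec n x) {k} = y 0 * x k + y k * x 0"
proof -
  have "clif_sign {i} (symdiff {i} {k}) * y i * paravec n x (symdiff {i} {k})
      = (if i = k then y k * x 0 else 0)" for i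
  proof (cases "i = k")
    case False
    then have "symdiff {i} {k} = {i, k}"
      by (auto simp: symdiff_def)
    with False show ?thesis
      by (simp add: paravec_non_singleton doubleton_eq_iff)
  qed (simp add: symdiff_def)
  with assms show ?thesis
    by (simp add: clif_mult_paravec_left)
qed

lemma clif_mult_paravec_bivector:
  assumes "j \<in> {1..n}" "k \<in> {1..n}" "j < k"
  shows "clif_mult n (paravec n y) (paravec n x) {j, k} = y j * x k - y k * x j"
proof -
  have "clif_sign {i} (symdiff {i} {j, k}) * y i * paravec n x (symdiff {i} {j, k})
      = (if i = j then y j * x k else 0) - (if i = k then y k * x j else 0)" for i
  proof -
    consider "i = j" | "i = k" | "i \<noteq> j" "i \<noteq> k"
      by blast
    then show ?thesis
    proof cases
      case 1
      then have "symdiff {i} {j, k} = {k}"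
        using assms by (auto simp: symdiff_def)
      with 1 assms show ?thesis
        by (simp add: clif_sign_singletons)
    next
      case 2
      then have "symdiff {i} {j, k} = {j}"
        using assms by (auto simp: symdiff_def)
      with 2 assms show ?thesis
        by (simp add: clif_sign_singletons)
    next
      case 3
      then have "symdiff {i} {j, k} = {i, j, k}"
        by (auto simp: symdiff_def)
      with 3 assms show ?thesis
        by (subst paravec_non_singleton) auto
    qed
  qed
  moreover have "paravec n x {j, k} = 0"
    using assms by (intro paravec_non_singleton) auto
  ultimately show ?thesis
    using assms by (simp add: clif_mult_paravec_left sum_subtractf)
qed

lemma symdiff_singleton_involution: "symdiff {i} (symdiff {i} C) = C"
  by (auto simp: symdiff_def)

lemma clif_mult_paravec_higher:
  assumes "C \<noteq> {}" "\<nexists>i. C = {i}" "\<nexists>j k. C = {j, k}"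
  shows "clif_mult n (paravec n y) (paravec n x) C = 0"
proof (cases "C \<subseteq> {1..n}")
  case True
  have "paravec n x (symdiff {i} C) = 0" for i
  proof (rule paravec_non_singleton)
    show "symdiff {i} C \<noteq> {}"
      using assms(2) by (auto simp: symdiff_def)
    show "\<nexists>m. symdiff {i} C = {m}"
    proof
      assume "\<exists>m. symdiff {i} C = {m}"
      then obtain m where "symdiff {i} C = {m}"
        by blast
      then have "C = symdiff {i} {m}"
        by (metis symdiff_singleton_involution)
      also have "\<dots> = (if i = m then {} else {i, m})"
        by (auto simp: symdiff_def)
      finally show False
        using assms(1,3) by (auto split: if_splits)
    qed
  qed
  with True assms show ?thesis
    by (simp add: clif_mult_paravec_left paravec_non_singleton)
qed (simp add: clif_mult_def)

lemma clif_mult_paravec_parallel: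
  assumes "\<And>i j. i \<in> {1..n} \<Longrightarrow> j \<in> {1..n} \<Longrightarrow> y i * x j = y j * x i"
  shows "clif_mult n (paravec n y) (paravec n x)
    = paravec n (\<lambda>i. if i = 0 then y 0 * x 0 - (\<Sum>i=1..n. y i * x i) else y 0 * x i + y i * x 0)"
    (is "_ = paravec n ?z")
proof
  fix C
  show "clif_mult n (paravec n y) (paravec n x) C = paravec n ?z C"
  proof (cases "C \<subseteq> {1..n}")
    case False
    then have "C \<noteq> {}" "\<And>i. C = {i} \<Longrightarrow> i \<notin> {1..n}"
      by auto
    then have "paravec n ?z C = 0"
      by (cases "\<exists>i. C = {i}") (auto simp: paravec_non_singleton)
    with False show ?thesis
      by (simp add: clif_mult_def)
  next
    case True
    consider "C = {}" | k where "C = {k}" | j k where "j < k" "C = {j, k}"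
      | "C \<noteq> {}" "\<nexists>i. C = {i}" "\<nexists>j k. C = {j, k}"
    proof -
      have "(\<exists>i. C = {i}) \<or> (\<exists>j k. j < k \<and> C = {j, k})" if "C = {j, k}" for j k
        using that by (cases j k rule: linorder_cases) (auto simp: insert_commute)
      then show ?thesis
        using that by blast
    qed
    then show ?thesis
    proof cases
      case 1
      then show ?thesis
        by (simp add: clif_mult_paravec_scalar)
    next
      case 2
      then show ?thesis
        using True by (simp add: clif_mult_paravec_vector)
    next
      case 3
      then show ?thesis
        using True assms[of j k] by (simp add: clif_mult_paravec_bivector paravec_non_singleton)
    next
      case 4
      then show ?thesis
        by (simp add: clif_mult_paravec_higher paravec_non_singleton)
    qed
  qed
qed

lemma clif_pow_paravec:
  "\<exists>a b. clif_pow n (paravec n x) l = paravec n (\<lambda>i. if i = 0 then a else b * x i)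
     \<and> a\<^sup>2 + b\<^sup>2 * (\<Sum>i=1..n. (x i)\<^sup>2) = (x 0 ^ 2 + (\<Sum>i=1..n. (x i)\<^sup>2)) ^ l"
proof (induction l)
  case 0
  have "clif_one = paravec n (\<lambda>i. if i = 0 then 1 else 0 * x i)"
  proof
    fix A
    show "clif_one A = paravec n (\<lambda>i. if i = 0 then 1 else 0 * x i) A"
      by (cases "\<exists>i. A = {i}") (auto simp: clif_one_def paravec_non_singleton split: if_splits)
  qed
  then show ?case
    by (intro exI[of _ 1] exI[of _ 0]) simp
next
  case (Suc l)
  then obtain a b where ab: "clif_pow n (paravec n x) l = paravec n (\<lambda>i. if i = 0 then a else b * x i)"
    and norm: "a\<^sup>2 + b\<^sup>2 * (\<Sum>i=1..n. (x i)\<^sup>2) = (x 0 ^ 2 + (\<Sum>i=1..n. (x i)\<^sup>2)) ^ l"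
    by blast
  define w where "w = (\<Sum>i=1..n. (x i)\<^sup>2)"
  define y where "y i = (if i = 0 then a else b * x i)" for i
  have "(\<Sum>i=1..n. y i * x i) = b * w"
    by (simp add: y_def w_def sum_distrib_left power2_eq_square mult.assoc)
  moreover have "y i * x j = y j * x i" if "i \<in> {1..n}" "j \<in> {1..n}" for i j
    using that by (simp add: y_def)
  ultimately have "clif_pow n (paravec n x) (Suc l)
      = paravec n (\<lambda>i. if i = 0 then a * x 0 - b * w else (a + b * x 0) * x i)"
    by (simp add: ab flip: y_def, subst clif_mult_paravec_parallel)
      (auto simp: y_def algebra_simps intro!: arg_cong[where f = "paravec n"])
  moreover have "(a * x 0 - b * w)\<^sup>2 + (a + b * x 0)\<^sup>2 * w = (a\<^sup>2 + b\<^sup>2 * w) * (x 0 ^ 2 + w)"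
    by (simp add: algebra_simps power2_eq_square)
  ultimately show ?case
    using norm by (intro exI[of _ "a * x 0 - b * w"] exI[of _ "a + b * x 0"]) (simp add: w_def mult.commute)
qed

lemma clif_norm_paravec: "clif_norm n (paravec n y) = sqrt (y 0 ^ 2 + (\<Sum>i=1..n. (y i)\<^sup>2))"
  unfolding clif_norm_def by (subst sum_Pow_empty_singletons) (auto simp: paravec_non_singleton)

lemma para_norm_eq_sqrt: "para_norm n x = sqrt (x 0 ^ 2 + (\<Sum>i=1..n. (x i)\<^sup>2))"
proof -
  have "{..n} = insert 0 {1..n}"
    by auto
  then show ?thesis
    by (simp add: para_norm_def)
qed

lemma clif_norm_pow_paravec: "clif_norm n (clif_pow n (paravec n x) l) = para_norm n x ^ l"
proof -
  obtain a b where ab: "clif_pow n (paravec n x) l = paravec n (\<lambda>i. if i = 0 then a else b * x i)"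
    and norm: "a\<^sup>2 + b\<^sup>2 * (\<Sum>i=1..n. (x i)\<^sup>2) = (x 0 ^ 2 + (\<Sum>i=1..n. (x i)\<^sup>2)) ^ l"
    using clif_pow_paravec by blast
  have "(\<Sum>i=1..n. (b * x i)\<^sup>2) = b\<^sup>2 * (\<Sum>i=1..n. (x i)\<^sup>2)"
    by (simp add: sum_distrib_left power_mult_distrib)
  with ab norm show ?thesis
    by (simp add: clif_norm_paravec para_norm_eq_sqrt real_sqrt_power)
qed

section \<open>Growth of normalized proximate orders\<close>

lemma proximate_order_has_real_derivative:
  assumes "proximate_order vr \<rho>" "0 < r"
  shows "(vr has_real_derivative deriv vr r) (at r)"
proof -
  have "at r within {0..} = at r"
    using assms(2) by (intro at_within_interior) auto
  with assms show ?thesis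
    unfolding proximate_order_def by (metis DERIV_deriv_iff_real_differentiable less_imp_le)
qed

lemma proximate_order_ln_powr_mvt:
  assumes po: "proximate_order vr \<rho>" and "0 < r1" "r1 < r2"
  obtains z where "r1 < z"
    and "vr r2 * ln r2 - vr r1 * ln r1 = (deriv vr z * z * ln z + vr z) * (ln r2 - ln r1)"
proof -
  define g where "g = (\<lambda>u. vr (exp u) * u)"
  have g': "(g has_real_derivative deriv vr (exp u) * exp u * u + vr (exp u)) (at u)" for u
  proof -
    have "((\<lambda>u. vr (exp u)) has_real_derivative deriv vr (exp u) * exp u) (at u)"
      by (rule DERIV_chain2[OF proximate_order_has_real_derivative[OF po] DERIV_exp]) simp
    from DERIV_mult[OF this DERIV_ident] show ?thesis
      by (simp add: g_def)
  qed
  moreover have "ln r1 < ln r2"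
    using assms(2,3) by simp
  ultimately obtain u where "ln r1 < u"
    and "g (ln r2) - g (ln r1) = (ln r2 - ln r1) * (deriv vr (exp u) * exp u * u + vr (exp u))"
    using MVT2[of "ln r1" "ln r2" g "\<lambda>u. deriv vr (exp u) * exp u * u + vr (exp u)"] g'
    by blast
  moreover have "r1 < exp u"
    using \<open>ln r1 < u\<close> \<open>0 < r1\<close> by (metis exp_less_cancel_iff exp_ln)
  ultimately show thesis
    using that[of "exp u"] assms(2,3) by (simp add: g_def mult.commute)
qed

lemma proximate_order_ln_powr_increment:
  assumes po: "proximate_order vr \<rho>" and "0 < \<epsilon>"
  obtains R0 where "0 < R0"
    and "\<And>r1 r2. R0 \<le> r1 \<Longrightarrow> R0 \<le> r2 \<Longrightarrow>
      \<exists>X. \<bar>X - \<rho>\<bar> < \<epsilon> \<and> vr r2 * ln r2 - vr r1 * ln r1 = X * (ln r2 - ln r1)"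
proof -
  have "((\<lambda>r. deriv vr r * r * ln r + vr r) \<longlongrightarrow> 0 + \<rho>) at_top"
    using po unfolding proximate_order_def by (intro tendsto_add) auto
  then have "\<forall>\<^sub>F r in at_top. \<bar>deriv vr r * r * ln r + vr r - \<rho>\<bar> < \<epsilon>"
    using \<open>0 < \<epsilon>\<close> by (simp add: tendsto_iff dist_real_def)
  then obtain R1 where R1: "\<And>r. R1 \<le> r \<Longrightarrow> \<bar>deriv vr r * r * ln r + vr r - \<rho>\<bar> < \<epsilon>"
    by (auto simp: eventually_at_top_linorder)
  define R0 where "R0 = max R1 1"
  have ordered: "\<exists>X. \<bar>X - \<rho>\<bar> < \<epsilon> \<and> vr r2 * ln r2 - vr r1 * ln r1 = X * (ln r2 - ln r1)"
    if "R0 \<le> r1" and r12: "r1 < r2" for r1 r2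
  proof -
    have "0 < r1"
      using \<open>R0 \<le> r1\<close> by (simp add: R0_def)
    then obtain z where "r1 < z"
      and "vr r2 * ln r2 - vr r1 * ln r1 = (deriv vr z * z * ln z + vr z) * (ln r2 - ln r1)"
      using proximate_order_ln_powr_mvt[OF po _ r12] by blast
    moreover have "R1 \<le> z"
      using \<open>r1 < z\<close> \<open>R0 \<le> r1\<close> by (simp add: R0_def)
    ultimately show ?thesis
      using R1 by blast
  qed
  show thesis
  proof (rule that)
    show "0 < R0"
      by (simp add: R0_def)
  next
    fix r1 r2
    assume "R0 \<le> r1" "R0 \<le> r2"
    consider "r1 < r2" | "r1 = r2" | "r2 < r1"
      by linarith
    then show "\<exists>X. \<bar>X - \<rho>\<bar> < \<epsilon> \<and> vr r2 * ln r2 - vr r1 * ln r1 = X * (ln r2 - ln r1)"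
    proof cases
      case 2
      with \<open>0 < \<epsilon>\<close> show ?thesis
        by (intro exI[of _ \<rho>]) simp
    next
      case 3
      then obtain X where "\<bar>X - \<rho>\<bar> < \<epsilon>" "vr r1 * ln r1 - vr r2 * ln r2 = X * (ln r1 - ln r2)"
        using ordered \<open>R0 \<le> r2\<close> by blast
      then show ?thesis
        by (intro exI[of _ X]) (simp add: algebra_simps)
    qed (use ordered \<open>R0 \<le> r1\<close> in auto)
  qed
qed

lemma proximate_order_continuous_on_powr:
  assumes "proximate_order vr \<rho>"
  shows "continuous_on {0<..} (\<lambda>r. r powr vr r)"
proof (intro continuous_at_imp_continuous_on ballI)
  fix r :: real
  assume "r \<in> {0<..}"
  then have "isCont vr r"
    using DERIV_isCont[OF proximate_order_has_real_derivative[OF assms]] by simp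
  with \<open>r \<in> {0<..}\<close> show "isCont (\<lambda>r. r powr vr r) r"
    by (intro continuous_intros) auto
qed

lemma proximate_order_powr_unbounded:
  assumes po: "proximate_order vr \<rho>"
  shows "\<exists>r>0. y \<le> r powr vr r"
proof -
  have "0 < \<rho>"
    using po by (simp add: proximate_order_def)
  then obtain R0 where "0 < R0" and incr: "\<And>r1 r2. R0 \<le> r1 \<Longrightarrow> R0 \<le> r2 \<Longrightarrow>
      \<exists>X. \<bar>X - \<rho>\<bar> < \<rho> / 2 \<and> vr r2 * ln r2 - vr r1 * ln r1 = X * (ln r2 - ln r1)"
    using proximate_order_ln_powr_increment[OF po, of "\<rho> / 2"] by auto
  define m where "m = max 0 ((ln y - vr R0 * ln R0) / (\<rho> / 2))"
  define r where "r = R0 * exp m"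
  have "0 \<le> m" "R0 \<le> r" "ln r = ln R0 + m"
    using \<open>0 < R0\<close> by (simp_all add: m_def r_def ln_mult)
  obtain X where "\<bar>X - \<rho>\<bar> < \<rho> / 2" "vr r * ln r - vr R0 * ln R0 = X * (ln r - ln R0)"
    using incr[of R0 r] \<open>R0 \<le> r\<close> by auto
  then have "\<rho> / 2 \<le> X" and increment: "vr r * ln r - vr R0 * ln R0 = X * m"
    using \<open>ln r = ln R0 + m\<close> by (linarith, simp)
  have "(ln y - vr R0 * ln R0) / (\<rho> / 2) \<le> m"
    by (simp add: m_def)
  then have "ln y - vr R0 * ln R0 \<le> \<rho> / 2 * m"
    using \<open>0 < \<rho>\<close> by (simp add: pos_divide_le_eq mult.commute)
  with \<open>0 \<le> m\<close> \<open>\<rho> / 2 \<le> X\<close> increment have "ln y \<le> vr r * ln r"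
    using mult_right_mono[of "\<rho> / 2" X m] by linarith
  have "y \<le> exp (vr r * ln r)"
  proof (cases "0 < y")
    case True
    from \<open>ln y \<le> vr r * ln r\<close> have "exp (ln y) \<le> exp (vr r * ln r)"
      by simp
    with True show ?thesis
      by simp
  next
    case False
    then show ?thesis
      using exp_gt_zero[of "vr r * ln r"] by linarith
  qed
  moreover have "0 < r"
    using \<open>0 < R0\<close> by (simp add: r_def)
  ultimately show ?thesis
    by (intro exI[of _ r]) (simp add: powr_def)
qed

lemma normalized_proximate_order_prox_phi:
  assumes npo: "normalized_proximate_order vr \<rho>" and "0 < y"
  shows "0 < prox_phi vr y" and "prox_phi vr y powr vr (prox_phi vr y) = y"
proof -
  let ?V = "\<lambda>r. r powr vr r"
  have po: "proximate_order vr \<rho>" and mono: "strict_mono_on {0<..} ?V"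
    and lim0: "(?V \<longlongrightarrow> 0) (at_right 0)"
    using npo by (auto simp: normalized_proximate_order_def)
  obtain b where "0 < b" "y \<le> ?V b"
    using proximate_order_powr_unbounded[OF po] by blast
  have "\<forall>\<^sub>F r in at_right 0. ?V r < y"
    using lim0 \<open>0 < y\<close> by (rule order_tendstoD)
  then obtain t where "0 < t" and small: "\<And>r. 0 < r \<Longrightarrow> r < t \<Longrightarrow> ?V r < y"
    by (auto simp: eventually_at_right_field)
  define a where "a = min (t / 2) b"
  have "0 < a" "a \<le> b" "?V a < y"
    using \<open>0 < t\<close> \<open>0 < b\<close> by (auto simp: a_def intro!: small)
  moreover have "continuous_on {a..b} ?V"
    using proximate_order_continuous_on_powr[OF po] by (rule continuous_on_subset) (use \<open>0 < a\<close> in auto)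
  ultimately obtain R where R: "a \<le> R" "R \<le> b" "?V R = y"
    using IVT'[of ?V a y b] \<open>y \<le> ?V b\<close> by auto
  have "prox_phi vr y = R"
    unfolding prox_phi_def
    by (rule the_inv_into_f_eq[OF strict_mono_on_imp_inj_on[OF mono]]) (use R \<open>0 < a\<close> in auto)
  with R \<open>0 < a\<close> show "0 < prox_phi vr y" and "prox_phi vr y powr vr (prox_phi vr y) = y"
    by auto
qed

lemma normalized_proximate_order_le_prox_phi:
  assumes npo: "normalized_proximate_order vr \<rho>" and "0 < K" and "K powr vr K \<le> y"
  shows "K \<le> prox_phi vr y"
proof (rule ccontr)
  assume "\<not> K \<le> prox_phi vr y"
  moreover have "0 < y"
    using assms(2,3) by (smt (verit) powr_gt_zero)
  moreover have "strict_mono_on {0<..} (\<lambda>r. r powr vr r)"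
    using npo by (simp add: normalized_proximate_order_def)
  ultimately have "prox_phi vr y powr vr (prox_phi vr y) < K powr vr K"
    using \<open>0 < K\<close> normalized_proximate_order_prox_phi(1)[OF npo \<open>0 < y\<close>]
    by (auto intro: strict_mono_onD)
  with assms(3) normalized_proximate_order_prox_phi[OF npo \<open>0 < y\<close>] show False
    by simp
qed

lemma normalized_proximate_order_prox_phi_at_top:
  assumes npo: "normalized_proximate_order vr \<rho>"
  shows "filterlim (\<lambda>l. prox_phi vr (real l)) at_top sequentially"
proof -
  have "\<exists>l0. \<forall>l\<ge>l0. Z \<le> prox_phi vr (real l)" for Z
  proof -
    define K where "K = max Z 1"
    have "K \<le> prox_phi vr (real l)" if "nat \<lceil>K powr vr K\<rceil> \<le> l" for l
      using that by (intro normalized_proximate_order_le_prox_phi[OF npo]) (auto simp: K_def)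
    then show ?thesis
      by (metis K_def max.bounded_iff)
  qed
  then show ?thesis
    by (simp add: filterlim_at_top eventually_sequentially)
qed

lemma linear_minus_exp_le:
  fixes a b D :: real
  assumes "0 < a" "0 < b"
  shows "D / a - b * exp D \<le> - (1 + ln (a * b)) / a"
proof -
  have "ln (a * b * exp D) \<le> a * b * exp D - 1"
    using assms by (intro ln_le_minus_one) auto
  then have "D + 1 + ln (a * b) \<le> a * (b * exp D)"
    using assms by (simp add: ln_mult)
  then have "(D + 1 + ln (a * b)) / a \<le> b * exp D"
    using assms by (simp add: divide_le_eq mult.commute)
  then show ?thesis
    by (simp add: add_divide_distrib diff_divide_distrib)
qed

text \<open>Here \<open>\<Lambda> r\<close> stands for \<open>ln (r powr vr r)\<close> and \<open>R\<close> for \<open>prox_phi vr l\<close>.\<close>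

lemma ln_monomial_weight_le:
  fixes \<Lambda> :: "real \<Rightarrow> real"
  assumes incr: "\<And>r. R0 \<le> r \<Longrightarrow>
      \<exists>X. 0 < X \<and> c \<le> (1 + ln (X * \<sigma>)) / X \<and> \<Lambda> r - \<Lambda> R = X * (ln r - ln R)"
    and "0 < R0" "ln R0 \<le> ln R - c" "0 < \<sigma>" "0 < l" "\<Lambda> R = ln l" "0 < r"
  shows "l * ln r - \<sigma> * exp (\<Lambda> r) \<le> l * (ln R - c)"
proof (cases "r < R0")
  case True
  then have "ln r < ln R0"
    using \<open>0 < r\<close> \<open>0 < R0\<close> by simp
  with \<open>ln R0 \<le> ln R - c\<close> have "ln r \<le> ln R - c"
    by linarith
  with \<open>0 < l\<close> have "l * ln r \<le> l * (ln R - c)"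
    by (simp add: mult_left_mono)
  moreover have "0 \<le> \<sigma> * exp (\<Lambda> r)"
    using \<open>0 < \<sigma>\<close> by simp
  ultimately show ?thesis
    by linarith
next
  case False
  then have "R0 \<le> r"
    by simp
  then obtain X where X: "0 < X" "c \<le> (1 + ln (X * \<sigma>)) / X"
    and increment: "\<Lambda> r - \<Lambda> R = X * (ln r - ln R)"
    using incr by blast
  define s where "s = ln r - ln R"
  have "\<Lambda> r = ln l + X * s"
    using increment \<open>\<Lambda> R = ln l\<close> unfolding s_def by linarith
  with \<open>0 < l\<close> have "exp (\<Lambda> r) = l * exp (X * s)"
    by (simp add: exp_add)
  then have "l * ln r - \<sigma> * exp (\<Lambda> r) = l * ln R + l * (s - \<sigma> * exp (X * s))"
    by (simp add: s_def algebra_simps)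
  moreover have "s - \<sigma> * exp (X * s) \<le> - c"
  proof -
    have "X * s / X - \<sigma> * exp (X * s) \<le> - (1 + ln (X * \<sigma>)) / X"
      using X(1) \<open>0 < \<sigma>\<close> by (rule linear_minus_exp_le)
    moreover have "X * s / X = s"
      using X(1) by simp
    ultimately show ?thesis
      using X(2) minus_divide_left[of "1 + ln (X * \<sigma>)" X] by linarith
  qed
  then have "l * (s - \<sigma> * exp (X * s)) \<le> l * (- c)"
    by (rule mult_left_mono) (use \<open>0 < l\<close> in simp)
  ultimately show ?thesis
    by (simp add: algebra_simps)
qed

lemma prox_G_div_powr:
  assumes "0 < \<rho>" "0 < \<sigma>'" "0 < l" "0 < prox_phi vr (real l)"
  shows "prox_G vr \<rho> l / \<sigma>' powr (real l / \<rho>)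
    = exp (real l * (ln (prox_phi vr (real l)) - (1 + ln (\<rho> * \<sigma>')) / \<rho>))"
proof -
  have "(exp 1 * \<rho>) powr (real l / \<rho>) * \<sigma>' powr (real l / \<rho>)
      = (exp 1 * \<rho> * \<sigma>') powr (real l / \<rho>)"
    using assms by (simp add: powr_mult)
  also have "\<dots> = exp (real l / \<rho> * (1 + ln (\<rho> * \<sigma>')))"
    using assms by (simp add: powr_def ln_mult algebra_simps)
  finally have "(exp 1 * \<rho>) powr (real l / \<rho>) * \<sigma>' powr (real l / \<rho>)
      = exp (real l / \<rho> * (1 + ln (\<rho> * \<sigma>')))" .
  moreover have "prox_phi vr (real l) ^ l = exp (real l * ln (prox_phi vr (real l)))"
    using assms(4) by (simp add: exp_of_nat_mult)
  ultimately show ?thesis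
    using assms by (simp add: prox_G_def right_diff_distrib exp_diff)
qed

lemma prox_G_pos:
  assumes "normalized_proximate_order vr \<rho>"
  shows "0 < prox_G vr \<rho> l"
  using assms normalized_proximate_order_prox_phi[OF assms, of "real l"]
  by (simp add: prox_G_def normalized_proximate_order_def proximate_order_def)

lemma monomial_bound_eventually_imp_uniform:
  fixes w :: "real \<Rightarrow> real" and g :: "nat \<Rightarrow> real"
  assumes large: "\<And>l r. l0 \<le> l \<Longrightarrow> 0 \<le> r \<Longrightarrow> r ^ l * w r \<le> g l"
    and w: "\<And>r. 0 \<le> w r" "\<And>r. w r \<le> 1" and g: "\<And>l. 0 < g l"
  shows "\<exists>C. \<forall>l r. 0 \<le> r \<longrightarrow> r ^ l * w r \<le> C * g l"
proof -
  define B where "B = max 1 (g l0)"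
  have small: "r ^ l * w r \<le> B" if "l < l0" "0 \<le> r" for l r
  proof (cases "r \<le> 1")
    case True
    then have "r ^ l * w r \<le> 1 * 1"
      using that w by (intro mult_mono power_le_one) auto
    then show ?thesis
      by (simp add: B_def)
  next
    case False
    then have "r ^ l * w r \<le> r ^ l0 * w r"
      using that w by (intro mult_right_mono power_increasing) auto
    also have "\<dots> \<le> g l0"
      using large that by simp
    finally show ?thesis
      by (simp add: B_def)
  qed
  define C where "C = Max (insert 1 ((\<lambda>l. B / g l) ` {..<l0}))"
  have "1 \<le> C"
    by (simp add: C_def)
  have "r ^ l * w r \<le> C * g l" if "0 \<le> r" for l r
  proof (cases "l0 \<le> l")
    case True
    then have "r ^ l * w r \<le> 1 * g l"
      using large that by simp
    also have "\<dots> \<le> C * g l"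
      using \<open>1 \<le> C\<close> g by (intro mult_right_mono) (auto simp: less_imp_le)
    finally show ?thesis .
  next
    case False
    then have "r ^ l * w r \<le> B / g l * g l"
      using small that g by (simp add: less_imp_neq[symmetric])
    also have "\<dots> \<le> C * g l"
      using False g by (intro mult_right_mono) (auto simp: C_def less_imp_le intro!: Max_ge)
    finally show ?thesis .
  qed
  then show ?thesis
    by blast
qed

lemma eventually_nhds_ln_rate_gt:
  fixes \<rho> \<sigma> \<sigma>' :: real
  assumes "0 < \<rho>" "0 < \<sigma>'" "\<sigma>' < \<sigma>"
  shows "\<forall>\<^sub>F X in nhds \<rho>. 0 < X \<and> (1 + ln (\<rho> * \<sigma>')) / \<rho> < (1 + ln (X * \<sigma>)) / X"
proof -
  have "((\<lambda>X. (1 + ln (X * \<sigma>)) / X) \<longlongrightarrow> (1 + ln (\<rho> * \<sigma>)) / \<rho>) (nhds \<rho>)"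
    using assms by (intro tendsto_intros filterlim_ident) auto
  moreover have "(1 + ln (\<rho> * \<sigma>')) / \<rho> < (1 + ln (\<rho> * \<sigma>)) / \<rho>"
    using assms by (simp add: divide_strict_right_mono)
  ultimately have "\<forall>\<^sub>F X in nhds \<rho>. (1 + ln (\<rho> * \<sigma>')) / \<rho> < (1 + ln (X * \<sigma>)) / X"
    by (rule order_tendstoD)
  with order_tendstoD(1)[OF filterlim_ident \<open>0 < \<rho>\<close>] show ?thesis
    by (rule eventually_conj)
qed

lemma normalized_proximate_order_monomial_weight_le:
  assumes npo: "normalized_proximate_order vr \<rho>" and "0 < \<sigma>'" "\<sigma>' < \<sigma>"
    and incr: "\<And>r1 r2. R0 \<le> r1 \<Longrightarrow> R0 \<le> r2 \<Longrightarrow> \<exists>X. 0 < X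
      \<and> (1 + ln (\<rho> * \<sigma>')) / \<rho> \<le> (1 + ln (X * \<sigma>)) / X
      \<and> vr r2 * ln r2 - vr r1 * ln r1 = X * (ln r2 - ln r1)"
    and "0 < R0" "0 < l" and K: "R0 * exp (max 0 ((1 + ln (\<rho> * \<sigma>')) / \<rho>)) \<le> prox_phi vr (real l)"
    and "0 \<le> r"
  shows "r ^ l * exp (- \<sigma> * r powr vr r) \<le> prox_G vr \<rho> l / \<sigma>' powr (real l / \<rho>)"
proof -
  have "0 < \<rho>"
    using npo by (simp add: normalized_proximate_order_def proximate_order_def)
  define c where "c = (1 + ln (\<rho> * \<sigma>')) / \<rho>"
  define R where "R = prox_phi vr (real l)"
  have "0 < R" and "R powr vr R = real l"
    using normalized_proximate_order_prox_phi[OF npo] \<open>0 < l\<close> by (simp_all add: R_def)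
  have "R0 \<le> R0 * exp (max 0 c)"
    using \<open>0 < R0\<close> by (simp add: mult_le_cancel_left1)
  with K have "R0 \<le> R"
    by (simp add: R_def c_def)
  have "ln (R0 * exp (max 0 c)) \<le> ln R"
    using K \<open>0 < R0\<close> \<open>0 < R\<close> by (subst ln_le_cancel_iff) (auto simp: R_def c_def)
  then have "ln R0 \<le> ln R - c"
    using \<open>0 < R0\<close> by (simp add: ln_mult)
  have G: "prox_G vr \<rho> l / \<sigma>' powr (real l / \<rho>) = exp (real l * (ln R - c))"
    using prox_G_div_powr[OF \<open>0 < \<rho>\<close> \<open>0 < \<sigma>'\<close> \<open>0 < l\<close>] \<open>0 < R\<close> by (simp add: R_def c_def)
  show ?thesis
  proof (cases "r = 0")
    case True
    with \<open>0 < l\<close> G show ?thesis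
      by (simp add: zero_power)
  next
    case False
    with \<open>0 \<le> r\<close> have "0 < r"
      by simp
    have "real l * ln r - \<sigma> * exp (vr r * ln r) \<le> real l * (ln R - c)"
    proof (rule ln_monomial_weight_le[where \<Lambda> = "\<lambda>r. vr r * ln r"])
      show "\<exists>X. 0 < X \<and> c \<le> (1 + ln (X * \<sigma>)) / X \<and> vr r' * ln r' - vr R * ln R = X * (ln r' - ln R)"
        if "R0 \<le> r'" for r'
        using incr[OF \<open>R0 \<le> R\<close> that] by (simp add: c_def)
      show "vr R * ln R = ln (real l)"
        using \<open>R powr vr R = real l\<close> \<open>0 < R\<close> by (metis ln_powr)
    qed (use \<open>0 < R0\<close> \<open>ln R0 \<le> ln R - c\<close> \<open>0 < \<sigma>'\<close> \<open>\<sigma>' < \<sigma>\<close> \<open>0 < l\<close> \<open>0 < r\<close> in auto)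
    then have "exp (real l * ln r - \<sigma> * exp (vr r * ln r)) \<le> exp (real l * (ln R - c))"
      by simp
    with \<open>0 < r\<close> G show ?thesis
      by (simp add: exp_diff exp_of_nat_mult powr_def mult.commute divide_inverse exp_minus)
  qed
qed

lemma normalized_proximate_order_monomial_weight_eventually_le:
  assumes npo: "normalized_proximate_order vr \<rho>" and "0 < \<sigma>'" "\<sigma>' < \<sigma>"
  obtains l0 where "\<And>l r. l0 \<le> l \<Longrightarrow> 0 \<le> r \<Longrightarrow>
    r ^ l * exp (- \<sigma> * r powr vr r) \<le> prox_G vr \<rho> l / \<sigma>' powr (real l / \<rho>)"
proof -
  have po: "proximate_order vr \<rho>" and "0 < \<rho>"
    using npo by (auto simp: normalized_proximate_order_def proximate_order_def)
  define c where "c = (1 + ln (\<rho> * \<sigma>')) / \<rho>"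
  obtain \<epsilon> where "0 < \<epsilon>"
    and near_\<rho>: "\<And>X. \<bar>X - \<rho>\<bar> < \<epsilon> \<Longrightarrow> 0 < X \<and> c < (1 + ln (X * \<sigma>)) / X"
    using eventually_nhds_ln_rate_gt[OF \<open>0 < \<rho>\<close> assms(2,3)]
    by (auto simp: c_def eventually_nhds_metric dist_real_def)
  obtain R0 where "0 < R0" and incr: "\<And>r1 r2. R0 \<le> r1 \<Longrightarrow> R0 \<le> r2 \<Longrightarrow>
      \<exists>X. \<bar>X - \<rho>\<bar> < \<epsilon> \<and> vr r2 * ln r2 - vr r1 * ln r1 = X * (ln r2 - ln r1)"
    using proximate_order_ln_powr_increment[OF po \<open>0 < \<epsilon>\<close>] by blast
  have incr': "\<exists>X. 0 < X \<and> c \<le> (1 + ln (X * \<sigma>)) / X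
      \<and> vr r2 * ln r2 - vr r1 * ln r1 = X * (ln r2 - ln r1)" if "R0 \<le> r1" "R0 \<le> r2" for r1 r2
    using incr[OF that] near_\<rho> by (meson less_imp_le)
  have "\<forall>\<^sub>F l in sequentially. R0 * exp (max 0 c) \<le> prox_phi vr (real l) \<and> 0 < l"
    using normalized_proximate_order_prox_phi_at_top[OF npo]
    by (intro eventually_conj) (auto simp: filterlim_at_top eventually_gt_at_top)
  then obtain l0 where l0: "\<And>l. l0 \<le> l \<Longrightarrow> R0 * exp (max 0 c) \<le> prox_phi vr (real l) \<and> 0 < l"
    by (auto simp: eventually_sequentially)
  show thesis
  proof (rule that)
    fix l :: nat and r :: real
    assume "l0 \<le> l" "0 \<le> r"
    with l0 show "r ^ l * exp (- \<sigma> * r powr vr r) \<le> prox_G vr \<rho> l / \<sigma>' powr (real l / \<rho>)"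
      by (intro normalized_proximate_order_monomial_weight_le[OF npo assms(2,3) incr'[unfolded c_def] \<open>0 < R0\<close>])
        (auto simp: c_def)
  qed
qed

theorem lemma3p10:
  fixes vr :: "real \<Rightarrow> real" and \<rho> \<sigma> \<sigma>' :: real and n :: nat
  assumes "normalized_proximate_order vr \<rho>"
    and "0 < \<sigma>'" and "\<sigma>' < \<sigma>"
  shows "\<exists>C::real. \<forall>l::nat.
     prox_norm n vr \<sigma> (\<lambda>x. clif_pow n (paravec n x) l)
       \<le> ereal (C * prox_G vr \<rho> l / \<sigma>' powr (real l / \<rho>))"
proof -
  let ?w = "\<lambda>r. exp (- \<sigma> * r powr vr r)" and ?g = "\<lambda>l. prox_G vr \<rho> l / \<sigma>' powr (real l / \<rho>)"
  obtain l0 where large: "\<And>l r. l0 \<le> l \<Longrightarrow> 0 \<le> r \<Longrightarrow> r ^ l * ?w r \<le> ?g l"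
    using normalized_proximate_order_monomial_weight_eventually_le[OF assms] by blast
  have weight: "0 \<le> ?w r" "?w r \<le> 1" for r
    using assms(2,3) by simp_all
  have g: "0 < ?g l" for l
    using prox_G_pos[OF assms(1)] assms(2) by simp
  have "\<exists>C. \<forall>l r. 0 \<le> r \<longrightarrow> r ^ l * ?w r \<le> C * ?g l"
    using large weight g by (rule monomial_bound_eventually_imp_uniform)
  then obtain C where C: "\<And>l r. 0 \<le> r \<Longrightarrow> r ^ l * ?w r \<le> C * ?g l"
    by blast
  have "prox_norm n vr \<sigma> (\<lambda>x. clif_pow n (paravec n x) l) \<le> ereal (C * ?g l)" for l
    unfolding prox_norm_def
  proof (rule SUP_least)
    fix x
    have "0 \<le> para_norm n x"
      by (simp add: para_norm_def sum_nonneg)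
    from C[OF this] show "ereal (clif_norm n (clif_pow n (paravec n x) l) * ?w (para_norm n x)) \<le> ereal (C * ?g l)"
      by (simp add: clif_norm_pow_paravec)
  qed
  then show ?thesis
    by auto
qed

end
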